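(* Let $\mathbf{X},\mathbf{Y},\mathbf{Z}$ be finite non-empty sets and let $P$ be a positive probability measure on $\mathbf{X}\times\mathbf{Y}\times\mathbf{Z}$. Let $(X_n,Y_n,Z_n)$, $n=1,\dots,N$, be independent random elements of $\mathbf{X}\times\mathbf{Y}\times\mathbf{Z}$, each distributed according to $P$, with $N\ge1$ fixed. Fix $\delta>0$, $\tilde x\in\mathbf{X}$ and $y\in\mathbf{Y}$, and define the parameter \[ P(y\mid\mathrm{do}(\tilde x)):=\sum_{z\in\mathbf{Z}}P(Z=z\mid X=\tilde x)\sum_{x\in\mathbf{X}}P(Y=y\mid X=x,Z=z)\,P(X=x). \] Let $K:=|\mathbf{X}||\mathbf{Z}|+|\mathbf{X}|+|\mathbf{Z}|$, \[ m:=\sum_{z\in\mathbf{Z}}\hat p(z\mid\tilde x)\sum_{x\in\mathbf{X}}\hat p(y\mid x,z)\,\hat p(x), \] \[ h:=|\mathbf{X}||\mathbf{Z}|\sqrt{\frac{\ln\frac{2K}{\delta}}{2N}}+|\mathbf{X}||\mathbf{Z}|\sqrt{\frac{\ln\frac{2K}{\delta}}{2\,\#\tilde x}}+\sum_{x\in\mathbf{X},z\in\mathbf{Z}}\sqrt{\frac{\ln\frac{2K}{\delta}}{2\,\#xz}}, \] with $h:=\infty$ if any of the counts in the denominators is $0$. Then $\mathbb{P}\bigl(P(y\mid\mathrm{do}(\tilde x))\in[m-h,m+h]\bigr)\ge1-\delta$.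
   Context: Counting notation: $\#x:=|\{n\in[N]:X_n=x\}|$, $\#xz:=|\{n\in[N]:(X_n,Z_n)=(x,z)\}|$, $\#xyz:=|\{n\in[N]:(X_n,Y_n,Z_n)=(x,y,z)\}|$. Estimates: $\hat p(x):=\#x/N$, $\hat p(z\mid\tilde x):=\#\tilde x z/\#\tilde x$, $\hat p(y\mid x,z):=\#xyz/\#xz$. The parameter is the causal effect of $X$ on $Y$ when a set of variables $Z$ of a causal dag satisfies Pearl's front-door criterion relative to $(X,Y)$ ($Z$ may be a tuple of variables, $\mathbf{Z}$ the product of their domains); the claim concerns only the displayed quantity. *)

theory Defs
  imports "HOL-Probability.Probability"
begin

definition pX :: "('x \<times> 'y \<times> 'z) pmf \<Rightarrow> 'x \<Rightarrow> real" where
  "pX P x = measure_pmf.prob P {t. fst t = x}"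

definition pXZ :: "('x \<times> 'y \<times> 'z) pmf \<Rightarrow> 'x \<Rightarrow> 'z \<Rightarrow> real" where
  "pXZ P x z = measure_pmf.prob P {t. fst t = x \<and> snd (snd t) = z}"

definition pXYZ :: "('x \<times> 'y \<times> 'z) pmf \<Rightarrow> 'x \<Rightarrow> 'y \<Rightarrow> 'z \<Rightarrow> real" where
  "pXYZ P x y z = measure_pmf.prob P {(x, y, z)}"

definition frontdoor :: "('x::finite \<times> 'y \<times> 'z::finite) pmf \<Rightarrow> 'x \<Rightarrow> 'y \<Rightarrow> real" where
  "frontdoor P xt y =
     (\<Sum>z\<in>UNIV. (pXZ P xt z / pX P xt) *
        (\<Sum>x\<in>UNIV. (pXYZ P x y z / pXZ P x z) * pX P x))"

definition cntX :: "nat \<Rightarrow> (nat \<Rightarrow> 'x \<times> 'y \<times> 'z) \<Rightarrow> 'x \<Rightarrow> nat" where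
  "cntX N \<omega> x = card {n \<in> {1..N}. fst (\<omega> n) = x}"

definition cntXZ :: "nat \<Rightarrow> (nat \<Rightarrow> 'x \<times> 'y \<times> 'z) \<Rightarrow> 'x \<Rightarrow> 'z \<Rightarrow> nat" where
  "cntXZ N \<omega> x z = card {n \<in> {1..N}. fst (\<omega> n) = x \<and> snd (snd (\<omega> n)) = z}"

definition cntXYZ :: "nat \<Rightarrow> (nat \<Rightarrow> 'x \<times> 'y \<times> 'z) \<Rightarrow> 'x \<Rightarrow> 'y \<Rightarrow> 'z \<Rightarrow> nat" where
  "cntXYZ N \<omega> x y z = card {n \<in> {1..N}. \<omega> n = (x, y, z)}"

definition est_m :: "nat \<Rightarrow> (nat \<Rightarrow> 'x::finite \<times> 'y \<times> 'z::finite) \<Rightarrow> 'x \<Rightarrow> 'y \<Rightarrow> real" where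
  "est_m N \<omega> xt y =
     (\<Sum>z\<in>UNIV. (real (cntXZ N \<omega> xt z) / real (cntX N \<omega> xt)) *
        (\<Sum>x\<in>UNIV. (real (cntXYZ N \<omega> x y z) / real (cntXZ N \<omega> x z)) *
                    (real (cntX N \<omega> x) / real N)))"

definition hwidth :: "real \<Rightarrow> nat \<Rightarrow> (nat \<Rightarrow> 'x::finite \<times> 'y \<times> 'z::finite) \<Rightarrow> 'x \<Rightarrow> ereal" where
  "hwidth \<delta> N \<omega> xt =
     (let K = CARD('x) * CARD('z) + CARD('x) + CARD('z);
          L = ln (2 * real K / \<delta>)
      in if N = 0 \<or> cntX N \<omega> xt = 0 \<or> (\<exists>x z. cntXZ N \<omega> x z = 0) then \<infinity>
         else ereal (real (CARD('x) * CARD('z)) * sqrt (L / (2 * real N))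
                   + real (CARD('x) * CARD('z)) * sqrt (L / (2 * real (cntX N \<omega> xt)))
                   + (\<Sum>(x, z)\<in>UNIV. sqrt (L / (2 * real (cntXZ N \<omega> x z))))))"

end

theory Submission
  imports Defs
begin

text \<open>Each of the K plug-in ratios hat p(x), hat p(z | xt) and hat p(y | x, z) is an empirical
  conditional frequency #(A \<inter> B) / #A. Conditionally on which sample points fall into A, their
  memberships in B are independent Bernoulli coins with success probability P(B | A), so Hoeffding's
  inequality for the binomial distribution bounds the probability that the ratio leaves the radius
  sqrt (L / (2 #A)) by 2 exp (-L). With L = ln (2 K / \<delta>) a union bound over the K ratios
  leaves probability at most \<delta>. Outside these events, as all factors lie in [0, 1], the error
  of a summand hat p(z | xt) hat p(y | x, z) hat p(x) is at most the sum of the errors of its three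
  factors, and summing over (x, z) gives the half-width h.\<close>

lemma measure_bind_pmf_le:
  assumes "\<And>x. x \<in> set_pmf p \<Longrightarrow> measure_pmf.prob (f x) A \<le> c"
  shows "measure_pmf.prob (p \<bind> f) A \<le> c"
proof -
  obtain x where "x \<in> set_pmf p" using set_pmf_not_empty by fast
  then have "c \<ge> 0" using assms[of x] measure_nonneg[of "f x" A] by linarith
  have "emeasure (measure_pmf (p \<bind> f)) A = (\<integral>\<^sup>+x. emeasure (measure_pmf (f x)) A \<partial>measure_pmf p)"
    by (rule emeasure_bind_pmf)
  also have "\<dots> \<le> ennreal c"
    using assms \<open>c \<ge> 0\<close>
    by (intro measure_pmf.nn_integral_le_const)
      (auto simp: AE_measure_pmf_iff measure_pmf.emeasure_eq_measure)
  finally show ?thesis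
    using \<open>c \<ge> 0\<close> by (simp add: measure_pmf.emeasure_eq_measure)
qed

lemma Pi_pmf_map_dependent:
  assumes "finite I"
  shows "Pi_pmf I dflt (\<lambda>i. map_pmf (f i) p) =
           map_pmf (\<lambda>g i. if i \<in> I then f i (g i) else dflt) (Pi_pmf I dflt' (\<lambda>_. p))"
proof -
  have "Pi_pmf I dflt (\<lambda>i. map_pmf (f i) p) = Pi_pmf I dflt (\<lambda>i. p \<bind> (\<lambda>b. return_pmf (f i b)))"
    by (simp add: map_pmf_def)
  also have "\<dots> = Pi_pmf I dflt' (\<lambda>_. p) \<bind> (\<lambda>g. Pi_pmf I dflt (\<lambda>i. return_pmf (f i (g i))))"
    by (rule Pi_pmf_bind[OF assms])
  also have "\<dots> = Pi_pmf I dflt' (\<lambda>_. p) \<bind> (\<lambda>g. return_pmf (\<lambda>i. if i \<in> I then f i (g i) else dflt))"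
    using assms by simp
  finally show ?thesis by (simp add: map_pmf_def)
qed

lemma measure_pmf_UN_le_card:
  fixes E :: "'i::finite \<Rightarrow> 'a set"
  assumes "\<And>i. measure_pmf.prob M (E i) \<le> \<epsilon>"
  shows "measure_pmf.prob M (\<Union>i. E i) \<le> real CARD('i) * \<epsilon>"
proof -
  have "measure_pmf.prob M (\<Union>i. E i) \<le> (\<Sum>i\<in>UNIV. measure_pmf.prob M (E i))"
    by (rule measure_pmf.finite_measure_subadditive_finite) auto
  also have "\<dots> \<le> real CARD('i) * \<epsilon>"
    using sum_mono[of UNIV _ "\<lambda>_. \<epsilon>", OF assms] by simp
  finally show ?thesis .
qed

definition freq_deviates :: "nat set \<Rightarrow> real \<Rightarrow> real \<Rightarrow> (nat \<Rightarrow> bool) \<Rightarrow> (nat \<Rightarrow> bool) \<Rightarrow> bool" where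
  "freq_deviates I L q a b \<longleftrightarrow>
     (let k = card {n \<in> I. a n}
      in 0 < k \<and> sqrt (L / (2 * real k)) < \<bar>real (card {n \<in> I. b n}) / real k - q\<bar>)"

lemma freq_deviates_cong:
  assumes "\<And>n. n \<in> I \<Longrightarrow> a n = a' n" and "\<And>n. n \<in> I \<Longrightarrow> b n = b' n"
  shows "freq_deviates I L q a b = freq_deviates I L q a' b'"
proof -
  have "{n \<in> I. a n} = {n \<in> I. a' n}" "{n \<in> I. b n} = {n \<in> I. b' n}"
    using assms by auto
  then show ?thesis by (simp add: freq_deviates_def)
qed

lemma prob_freq_deviates_bernoulli:
  assumes "finite I" and "0 \<le> q" "q \<le> 1"
  shows "measure_pmf.prob (Pi_pmf I False (\<lambda>_. bernoulli_pmf q))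
           {g. freq_deviates I L q c (\<lambda>n. c n \<and> g n)} \<le> 2 * exp (- L)"
proof -
  define S where "S = {n \<in> I. c n}"
  have "finite S" using assms(1) by (simp add: S_def)
  have count: "{n \<in> I. c n \<and> g n} = {n \<in> S. g n}" for g :: "nat \<Rightarrow> bool"
    by (auto simp: S_def)
  consider "S = {}" | "L < 0" | "S \<noteq> {}" "0 \<le> L" by fastforce
  then show ?thesis
  proof cases
    case 1
    then show ?thesis by (simp add: freq_deviates_def S_def[symmetric])
  next
    case 2
    then have "1 \<le> exp (- L)" by simp
    show ?thesis
      by (rule order_trans[OF measure_pmf.prob_le_1]) (use \<open>1 \<le> exp (- L)\<close> in linarith)
  next
    case 3
    define \<epsilon> where "\<epsilon> = sqrt (L / (2 * real (card S)))"
    have "card S > 0" using 3 \<open>finite S\<close> by (simp add: card_gt_0_iff)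
    have "\<epsilon> \<ge> 0" using 3 by (simp add: \<epsilon>_def)
    interpret binomial_distribution "card S" q by unfold_locales (use assms in auto)
    have "binomial_pmf (card S) q =
        map_pmf (\<lambda>g. card {n \<in> S. g n}) (Pi_pmf S False (\<lambda>_. bernoulli_pmf q))"
      by (rule binomial_pmf_altdef') (use \<open>finite S\<close> assms in auto)
    also have "Pi_pmf S False (\<lambda>_. bernoulli_pmf q) =
        map_pmf (\<lambda>g n. if n \<in> S then g n else False) (Pi_pmf I False (\<lambda>_. bernoulli_pmf q))"
      by (rule Pi_pmf_subset) (use assms(1) in \<open>auto simp: S_def\<close>)
    finally have binomial: "binomial_pmf (card S) q =
        map_pmf (\<lambda>g. card {n \<in> S. g n}) (Pi_pmf I False (\<lambda>_. bernoulli_pmf q))"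
      by (simp add: map_pmf_comp cong: conj_cong)
    have "measure_pmf.prob (Pi_pmf I False (\<lambda>_. bernoulli_pmf q))
           {g. freq_deviates I L q c (\<lambda>n. c n \<and> g n)}
        = measure_pmf.prob (binomial_pmf (card S) q) {k. \<epsilon> < \<bar>real k / real (card S) - q\<bar>}"
      using \<open>card S > 0\<close>
      by (simp add: binomial vimage_def freq_deviates_def Let_def count \<epsilon>_def S_def[symmetric])
    also have "\<dots> \<le> measure_pmf.prob (binomial_pmf (card S) q) {k. \<epsilon> \<le> \<bar>real k / real (card S) - q\<bar>}"
      by (intro measure_pmf.finite_measure_mono) auto
    also have "\<dots> \<le> 2 * exp (- 2 * real (card S) * \<epsilon>\<^sup>2)"
      using prob_abs_ge'[OF \<open>card S > 0\<close> \<open>\<epsilon> \<ge> 0\<close>] by simp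
    also have "- 2 * real (card S) * \<epsilon>\<^sup>2 = - L"
      using \<open>card S > 0\<close> 3 by (simp add: \<epsilon>_def)
    finally show ?thesis .
  qed
qed

lemma map_pmf_membership_pair:
  fixes Q :: "'a pmf" and A B :: "'a set"
  assumes "measure_pmf.prob Q A > 0"
  defines "pa \<equiv> measure_pmf.prob Q A"
  defines "q \<equiv> measure_pmf.prob Q (A \<inter> B) / pa"
  shows "map_pmf (\<lambda>t. (t \<in> A, t \<in> A \<inter> B)) Q =
           bernoulli_pmf pa \<bind> (\<lambda>c. map_pmf (\<lambda>b. (c, c \<and> b)) (bernoulli_pmf q))"
proof (rule pmf_eqI)
  fix ab :: "bool \<times> bool"
  obtain a b where ab: "ab = (a, b)" by fastforce
  have pa: "0 \<le> pa" "pa \<le> 1" by (simp_all add: pa_def)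
  have "measure_pmf.prob Q (A \<inter> B) \<le> pa"
    unfolding pa_def by (intro measure_pmf.finite_measure_mono) auto
  then have q: "0 \<le> q" "q \<le> 1" and pa_q: "pa * q = measure_pmf.prob Q (A \<inter> B)"
    using assms(1) by (simp_all add: q_def pa_def)
  have diff: "measure_pmf.prob Q (A - B) = pa - measure_pmf.prob Q (A \<inter> B)"
    using measure_pmf.finite_measure_Diff'[of A Q B] by (simp add: pa_def Int_commute)
  have compl: "measure_pmf.prob Q (- A) = 1 - pa"
    using measure_pmf.prob_compl[of A Q] by (simp add: pa_def Compl_eq_Diff_UNIV)
  have "(\<lambda>t. (t \<in> A, t \<in> A \<inter> B)) -` {(a, b)} =
      (if a then if b then A \<inter> B else A - B else if b then {} else - A)"
    by auto
  moreover have "pmf (bernoulli_pmf pa \<bind> (\<lambda>c. map_pmf (\<lambda>b. (c, c \<and> b)) (bernoulli_pmf q))) (a, b) =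
      (if a then pa * pmf (bernoulli_pmf q) b else if b then 0 else 1 - pa)"
  proof -
    have "{c. c} = {True}" "- {c. c} = {False}" by auto
    then show ?thesis
      using pa q by (cases a; cases b)
        (simp_all add: pmf_bind integral_bernoulli_pmf pmf_map vimage_def measure_pmf_single
          Collect_conj_eq Collect_neg_eq)
  qed
  ultimately show "pmf (map_pmf (\<lambda>t. (t \<in> A, t \<in> A \<inter> B)) Q) ab =
      pmf (bernoulli_pmf pa \<bind> (\<lambda>c. map_pmf (\<lambda>b. (c, c \<and> b)) (bernoulli_pmf q))) ab"
    using q pa_q diff compl by (simp add: ab pmf_map right_diff_distrib)
qed

definition cond_freq_deviates :: "nat set \<Rightarrow> real \<Rightarrow> 'a pmf \<Rightarrow> 'a set \<Rightarrow> 'a set \<Rightarrow> (nat \<Rightarrow> 'a) set" where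
  "cond_freq_deviates I L Q A B =
     {\<omega>. freq_deviates I L (measure_pmf.prob Q (A \<inter> B) / measure_pmf.prob Q A)
           (\<lambda>n. \<omega> n \<in> A) (\<lambda>n. \<omega> n \<in> A \<inter> B)}"

lemma prob_cond_freq_deviates:
  assumes "finite I" and "measure_pmf.prob Q A > 0"
  shows "measure_pmf.prob (Pi_pmf I d (\<lambda>_. Q)) (cond_freq_deviates I L Q A B) \<le> 2 * exp (- L)"
proof -
  define pa where "pa = measure_pmf.prob Q A"
  define q where "q = measure_pmf.prob Q (A \<inter> B) / pa"
  have "measure_pmf.prob Q (A \<inter> B) \<le> pa"
    unfolding pa_def by (intro measure_pmf.finite_measure_mono) auto
  then have q: "0 \<le> q" "q \<le> 1" using assms(2) by (simp_all add: q_def pa_def)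
  define \<phi> where "\<phi> = (\<lambda>t. (t \<in> A, t \<in> A \<inter> B))"
  define bad where "bad = {h. freq_deviates I L q (\<lambda>n. fst (h n)) (\<lambda>n. snd (h n))}"
  define G where "G c g n = (if n \<in> I then (c n, c n \<and> g n) else \<phi> d)" for c g :: "nat \<Rightarrow> bool" and n
  \<comment> \<open>Draw the indicators c of A first; given c, the indicators of A \<inter> B are c n \<and> g n
    for independent Bernoulli(q) coins g.\<close>
  have "map_pmf ((\<circ>) \<phi>) (Pi_pmf I d (\<lambda>_. Q)) = Pi_pmf I (\<phi> d) (\<lambda>_. map_pmf \<phi> Q)"
    by (rule Pi_pmf_map[symmetric]) (use assms(1) in auto)
  also have "\<dots> = Pi_pmf I (\<phi> d)
      (\<lambda>_. bernoulli_pmf pa \<bind> (\<lambda>c. map_pmf (\<lambda>b. (c, c \<and> b)) (bernoulli_pmf q)))"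
    using map_pmf_membership_pair[OF assms(2), of B] by (simp only: \<phi>_def pa_def q_def)
  also have "\<dots> = Pi_pmf I False (\<lambda>_. bernoulli_pmf pa) \<bind>
      (\<lambda>c. Pi_pmf I (\<phi> d) (\<lambda>n. map_pmf (\<lambda>b. (c n, c n \<and> b)) (bernoulli_pmf q)))"
    by (rule Pi_pmf_bind[OF assms(1)])
  also have "\<dots> = Pi_pmf I False (\<lambda>_. bernoulli_pmf pa) \<bind>
      (\<lambda>c. map_pmf (G c) (Pi_pmf I False (\<lambda>_. bernoulli_pmf q)))"
    unfolding G_def by (intro bind_pmf_cong refl Pi_pmf_map_dependent assms(1))
  finally have decomposition: "map_pmf ((\<circ>) \<phi>) (Pi_pmf I d (\<lambda>_. Q)) = \<dots>" .
  have "freq_deviates I L q (\<lambda>n. fst (G c g n)) (\<lambda>n. snd (G c g n)) =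
      freq_deviates I L q c (\<lambda>n. c n \<and> g n)" for c g
    by (rule freq_deviates_cong) (simp_all add: G_def)
  then have "G c -` bad = {g. freq_deviates I L q c (\<lambda>n. c n \<and> g n)}" for c
    by (simp add: bad_def vimage_def)
  then have "measure_pmf.prob (map_pmf (G c) (Pi_pmf I False (\<lambda>_. bernoulli_pmf q))) bad
      \<le> 2 * exp (- L)" for c
    using prob_freq_deviates_bernoulli[OF assms(1) q] by simp
  then have "measure_pmf.prob (map_pmf ((\<circ>) \<phi>) (Pi_pmf I d (\<lambda>_. Q))) bad \<le> 2 * exp (- L)"
    unfolding decomposition by (intro measure_bind_pmf_le)
  moreover have "cond_freq_deviates I L Q A B = (\<circ>) \<phi> -` bad"
    by (simp add: cond_freq_deviates_def bad_def \<phi>_def q_def pa_def)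
  ultimately show ?thesis by simp
qed

lemma not_cond_freq_deviates:
  assumes "\<omega> \<notin> cond_freq_deviates I L Q A B" and "0 < card {n \<in> I. \<omega> n \<in> A}"
  shows "\<bar>real (card {n \<in> I. \<omega> n \<in> A \<inter> B}) / real (card {n \<in> I. \<omega> n \<in> A})
           - measure_pmf.prob Q (A \<inter> B) / measure_pmf.prob Q A\<bar>
         \<le> sqrt (L / (2 * real (card {n \<in> I. \<omega> n \<in> A})))"
  using assms by (auto simp: cond_freq_deviates_def freq_deviates_def Let_def not_less)

lemma abs_mult_diff_le:
  fixes a a' b b' :: "'a::linordered_idom"
  assumes "\<bar>a\<bar> \<le> 1" and "\<bar>b'\<bar> \<le> 1"
  shows "\<bar>a' * b' - a * b\<bar> \<le> \<bar>a' - a\<bar> + \<bar>b' - b\<bar>"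
proof -
  have "a' * b' - a * b = (a' - a) * b' + a * (b' - b)"
    by (simp add: algebra_simps)
  also have "\<bar>\<dots>\<bar> \<le> \<bar>a' - a\<bar> * \<bar>b'\<bar> + \<bar>a\<bar> * \<bar>b' - b\<bar>"
    by (metis abs_mult abs_triangle_ineq)
  also have "\<dots> \<le> \<bar>a' - a\<bar> + \<bar>b' - b\<bar>"
    using assms by (intro add_mono mult_left_le mult_left_le_one_le) auto
  finally show ?thesis .
qed

lemma abs_divide_le_one:
  fixes a b :: real
  assumes "0 \<le> a" and "a \<le> b"
  shows "\<bar>a / b\<bar> \<le> 1"
  using assms by (cases "b = 0") auto

lemma abs_diff_double_sum_le:
  fixes a a' :: "'z::finite \<Rightarrow> real" and b b' e :: "'x::finite \<Rightarrow> 'z \<Rightarrow> real"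
    and c c' :: "'x \<Rightarrow> real"
  assumes "\<And>z. \<bar>a z\<bar> \<le> 1" "\<And>x z. \<bar>b x z\<bar> \<le> 1" "\<And>x z. \<bar>b' x z\<bar> \<le> 1" "\<And>x. \<bar>c' x\<bar> \<le> 1"
    and "\<And>x. \<bar>c' x - c x\<bar> \<le> ec" "\<And>z. \<bar>a' z - a z\<bar> \<le> ea" "\<And>x z. \<bar>b' x z - b x z\<bar> \<le> e x z"
  shows "\<bar>(\<Sum>z\<in>UNIV. a' z * (\<Sum>x\<in>UNIV. b' x z * c' x)) - (\<Sum>z\<in>UNIV. a z * (\<Sum>x\<in>UNIV. b x z * c x))\<bar>
     \<le> real (CARD('x) * CARD('z)) * ec + real (CARD('x) * CARD('z)) * ea + (\<Sum>(x, z)\<in>UNIV. e x z)"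
proof -
  have summand: "\<bar>a' z * (b' x z * c' x) - a z * (b x z * c x)\<bar> \<le> ea + e x z + ec" for x z
  proof -
    have "\<bar>b' x z * c' x\<bar> \<le> 1"
      using assms(3,4) by (simp add: abs_mult mult_le_one)
    then have "\<bar>a' z * (b' x z * c' x) - a z * (b x z * c x)\<bar>
        \<le> \<bar>a' z - a z\<bar> + \<bar>b' x z * c' x - b x z * c x\<bar>"
      by (rule abs_mult_diff_le[OF assms(1)])
    also have "\<bar>b' x z * c' x - b x z * c x\<bar> \<le> \<bar>b' x z - b x z\<bar> + \<bar>c' x - c x\<bar>"
      by (rule abs_mult_diff_le[OF assms(2,4)])
    finally show ?thesis
      using assms(5)[of x] assms(6)[of z] assms(7)[of x z] by linarith
  qed
  have "(\<Sum>z\<in>UNIV. a' z * (\<Sum>x\<in>UNIV. b' x z * c' x)) - (\<Sum>z\<in>UNIV. a z * (\<Sum>x\<in>UNIV. b x z * c x))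
     = (\<Sum>z\<in>UNIV. \<Sum>x\<in>UNIV. a' z * (b' x z * c' x) - a z * (b x z * c x))"
    by (simp add: sum_distrib_left sum_subtractf)
  also have "\<bar>\<dots>\<bar> \<le> (\<Sum>z\<in>UNIV. \<Sum>x\<in>UNIV. ea + e x z + ec)"
    using summand by (intro order_trans[OF sum_abs sum_mono] order_trans[OF sum_abs sum_mono])
  also have "\<dots> = real (CARD('x) * CARD('z)) * ec + real (CARD('x) * CARD('z)) * ea
      + (\<Sum>z\<in>UNIV. \<Sum>x\<in>UNIV. e x z)"
    by (simp add: sum.distrib algebra_simps)
  also have "(\<Sum>z\<in>UNIV. \<Sum>x\<in>UNIV. e x z) = (\<Sum>(x, z)\<in>UNIV. e x z)"
    by (subst sum.swap) (simp add: sum.cartesian_product)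
  finally show ?thesis .
qed

lemma cntX_le: "cntX N \<omega> x \<le> N"
proof -
  have "cntX N \<omega> x \<le> card {1..N}" unfolding cntX_def by (intro card_mono) auto
  then show ?thesis by simp
qed

lemma cntXZ_le_cntX: "cntXZ N \<omega> x z \<le> cntX N \<omega> x"
  unfolding cntXZ_def cntX_def by (intro card_mono) auto

lemma cntXYZ_le_cntXZ: "cntXYZ N \<omega> x y z \<le> cntXZ N \<omega> x z"
  unfolding cntXYZ_def cntXZ_def by (intro card_mono) auto

lemma pXZ_le_pX: "pXZ P x z \<le> pX P x"
  unfolding pXZ_def pX_def by (intro measure_pmf.finite_measure_mono) auto

lemma pXYZ_le_pXZ: "pXYZ P x y z \<le> pXZ P x z"
  unfolding pXYZ_def pXZ_def by (intro measure_pmf.finite_measure_mono) auto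

lemma frontdoor_estimate_error:
  fixes P :: "('x::finite \<times> 'y \<times> 'z::finite) pmf" and \<omega> :: "nat \<Rightarrow> 'x \<times> 'y \<times> 'z"
  assumes "\<And>x. \<bar>real (cntX N \<omega> x) / real N - pX P x\<bar> \<le> eN"
    and "\<And>z. \<bar>real (cntXZ N \<omega> xt z) / real (cntX N \<omega> xt) - pXZ P xt z / pX P xt\<bar> \<le> ea"
    and "\<And>x z. \<bar>real (cntXYZ N \<omega> x y z) / real (cntXZ N \<omega> x z) - pXYZ P x y z / pXZ P x z\<bar> \<le> e x z"
  shows "\<bar>est_m N \<omega> xt y - frontdoor P xt y\<bar>
    \<le> real (CARD('x) * CARD('z)) * eN + real (CARD('x) * CARD('z)) * ea + (\<Sum>(x, z)\<in>UNIV. e x z)"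
  unfolding est_m_def frontdoor_def
proof (rule abs_diff_double_sum_le)
  show "\<bar>pXZ P xt z / pX P xt\<bar> \<le> 1" for z
    by (rule abs_divide_le_one[OF _ pXZ_le_pX]) (simp add: pXZ_def)
  show "\<bar>pXYZ P x y z / pXZ P x z\<bar> \<le> 1" for x z
    by (rule abs_divide_le_one[OF _ pXYZ_le_pXZ]) (simp add: pXYZ_def)
  show "\<bar>real (cntXYZ N \<omega> x y z) / real (cntXZ N \<omega> x z)\<bar> \<le> 1" for x z
    by (rule abs_divide_le_one) (simp_all add: cntXYZ_le_cntXZ)
  show "\<bar>real (cntX N \<omega> x) / real N\<bar> \<le> 1" for x
    by (rule abs_divide_le_one) (simp_all add: cntX_le)
qed (use assms in auto)

definition frontdoor_deviation_event ::
    "nat \<Rightarrow> real \<Rightarrow> ('x \<times> 'y \<times> 'z) pmf \<Rightarrow> 'x \<Rightarrow> 'y \<Rightarrow> (nat \<Rightarrow> 'x \<times> 'y \<times> 'z) set" where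
  "frontdoor_deviation_event N L P xt y =
     (\<Union>x. cond_freq_deviates {1..N} L P UNIV {t. fst t = x})
     \<union> (\<Union>z. cond_freq_deviates {1..N} L P {t. fst t = xt} {t. snd (snd t) = z})
     \<union> (\<Union>(x, z). cond_freq_deviates {1..N} L P {t. fst t = x \<and> snd (snd t) = z} {t. fst (snd t) = y})"

lemma prob_frontdoor_deviation_event:
  fixes P :: "('x::finite \<times> 'y \<times> 'z::finite) pmf"
  assumes "\<And>t. pmf P t > 0"
  shows "measure_pmf.prob (Pi_pmf {1..N} d (\<lambda>_. P)) (frontdoor_deviation_event N L P xt y)
    \<le> real (CARD('x) * CARD('z) + CARD('x) + CARD('z)) * (2 * exp (- L))"
proof -
  let ?M = "Pi_pmf {1..N} d (\<lambda>_. P)" and ?D = "cond_freq_deviates {1..N} L P"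
  have D: "measure_pmf.prob ?M (?D A B) \<le> 2 * exp (- L)" if "t \<in> A" for A B t
    using assms[of t] that
    by (intro prob_cond_freq_deviates measure_pmf_posI[of t]) (auto simp: set_pmf_iff)
  have X: "measure_pmf.prob ?M (?D UNIV {t. fst t = x}) \<le> 2 * exp (- L)" for x
    by (rule D) simp
  have Z: "measure_pmf.prob ?M (?D {t. fst t = xt} {t. snd (snd t) = z}) \<le> 2 * exp (- L)" for z
    by (rule D[of "(xt, y, z)"]) simp
  have Y: "measure_pmf.prob ?M (?D {t. fst t = x \<and> snd (snd t) = z} {t. fst (snd t) = y})
      \<le> 2 * exp (- L)" for x z
    by (rule D[of "(x, y, z)"]) simp
  have "measure_pmf.prob ?M (frontdoor_deviation_event N L P xt y)
      \<le> measure_pmf.prob ?M (\<Union>x. ?D UNIV {t. fst t = x})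
       + measure_pmf.prob ?M (\<Union>z. ?D {t. fst t = xt} {t. snd (snd t) = z})
       + measure_pmf.prob ?M (\<Union>(x, z). ?D {t. fst t = x \<and> snd (snd t) = z} {t. fst (snd t) = y})"
    unfolding frontdoor_deviation_event_def
    by (intro order_trans[OF measure_Un_le add_right_mono[OF measure_Un_le]]) auto
  also have "\<dots> \<le> real CARD('x) * (2 * exp (- L)) + real CARD('z) * (2 * exp (- L))
      + real CARD('x \<times> 'z) * (2 * exp (- L))"
    using X Z Y by (intro add_mono measure_pmf_UN_le_card) (auto split: prod.split)
  finally show ?thesis by (simp add: algebra_simps)
qed

lemma frontdoor_within_hwidth:
  fixes P :: "('x::finite \<times> 'y \<times> 'z::finite) pmf" and \<omega> :: "nat \<Rightarrow> 'x \<times> 'y \<times> 'z"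
  assumes "N \<ge> 1"
    and L: "L = ln (2 * real (CARD('x) * CARD('z) + CARD('x) + CARD('z)) / \<delta>)"
    and "\<omega> \<notin> frontdoor_deviation_event N L P xt y"
  shows "ereal (est_m N \<omega> xt y) - hwidth \<delta> N \<omega> xt \<le> ereal (frontdoor P xt y)
       \<and> ereal (frontdoor P xt y) \<le> ereal (est_m N \<omega> xt y) + hwidth \<delta> N \<omega> xt"
proof (cases "cntX N \<omega> xt = 0 \<or> (\<exists>x z. cntXZ N \<omega> x z = 0)")
  case True
  then show ?thesis by (simp add: hwidth_def)
next
  case False
  then have "0 < cntX N \<omega> xt" and "0 < cntXZ N \<omega> x z" for x z by auto
  have X: "\<omega> \<notin> cond_freq_deviates {1..N} L P UNIV {t. fst t = x}"
    and Z: "\<omega> \<notin> cond_freq_deviates {1..N} L P {t. fst t = xt} {t. snd (snd t) = z}"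
    and Y: "\<omega> \<notin> cond_freq_deviates {1..N} L P {t. fst t = x \<and> snd (snd t) = z} {t. fst (snd t) = y}"
    for x z using assms(3) by (auto simp: frontdoor_deviation_event_def)
  have "{n \<in> {1..N}. \<omega> n \<in> UNIV} = {1..N}" by auto
  then have "\<bar>real (cntX N \<omega> x) / real N - pX P x\<bar> \<le> sqrt (L / (2 * real N))" for x
    using not_cond_freq_deviates[OF X[of x]] \<open>N \<ge> 1\<close> unfolding cntX_def pX_def by simp
  moreover have "\<bar>real (cntXZ N \<omega> xt z) / real (cntX N \<omega> xt) - pXZ P xt z / pX P xt\<bar>
      \<le> sqrt (L / (2 * real (cntX N \<omega> xt)))" for z
    using not_cond_freq_deviates[OF Z[of z]] \<open>0 < cntX N \<omega> xt\<close>
    unfolding cntX_def cntXZ_def pX_def pXZ_def by (simp add: Int_def)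
  moreover have "\<bar>real (cntXYZ N \<omega> x y z) / real (cntXZ N \<omega> x z) - pXYZ P x y z / pXZ P x z\<bar>
      \<le> sqrt (L / (2 * real (cntXZ N \<omega> x z)))" for x z
  proof -
    have "{t. fst t = x \<and> snd (snd t) = z} \<inter> {t. fst (snd t) = y} = {(x, y, z)}" by auto
    then show ?thesis
      using not_cond_freq_deviates[OF Y[of x z]] \<open>0 < cntXZ N \<omega> x z\<close>
      unfolding cntXZ_def cntXYZ_def pXZ_def pXYZ_def by simp
  qed
  ultimately have "\<bar>est_m N \<omega> xt y - frontdoor P xt y\<bar>
      \<le> real (CARD('x) * CARD('z)) * sqrt (L / (2 * real N))
       + real (CARD('x) * CARD('z)) * sqrt (L / (2 * real (cntX N \<omega> xt)))
       + (\<Sum>(x, z)\<in>UNIV. sqrt (L / (2 * real (cntXZ N \<omega> x z))))"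
    by (rule frontdoor_estimate_error)
  then show ?thesis
    using False \<open>N \<ge> 1\<close> by (simp add: hwidth_def Let_def L abs_le_iff)
qed

theorem theorem2:
  fixes P :: "('x::finite \<times> 'y::finite \<times> 'z::finite) pmf"
    and N :: nat and \<delta> :: real and xt :: 'x and y :: 'y
  assumes pos: "\<And>t. pmf P t > 0"
    and N: "N \<ge> 1"
    and \<delta>: "\<delta> > 0"
  shows "measure_pmf.prob (Pi_pmf {1..N} undefined (\<lambda>_. P))
           {\<omega>. ereal (est_m N \<omega> xt y) - hwidth \<delta> N \<omega> xt \<le> ereal (frontdoor P xt y)
              \<and> ereal (frontdoor P xt y) \<le> ereal (est_m N \<omega> xt y) + hwidth \<delta> N \<omega> xt}
         \<ge> 1 - \<delta>"
proof -
  define M where "M = Pi_pmf {1..N} undefined (\<lambda>_. P)"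
  define good where "good = {\<omega> :: nat \<Rightarrow> 'x \<times> 'y \<times> 'z.
    ereal (est_m N \<omega> xt y) - hwidth \<delta> N \<omega> xt \<le> ereal (frontdoor P xt y)
    \<and> ereal (frontdoor P xt y) \<le> ereal (est_m N \<omega> xt y) + hwidth \<delta> N \<omega> xt}"
  define K where "K = CARD('x) * CARD('z) + CARD('x) + CARD('z)"
  define L where "L = ln (2 * real K / \<delta>)"
  define bad where "bad = frontdoor_deviation_event N L P xt y"
  have "K > 0" by (simp add: K_def)
  have "measure_pmf.prob M bad \<le> real K * (2 * exp (- L))"
    unfolding M_def bad_def K_def by (rule prob_frontdoor_deviation_event[OF pos])
  also have "\<dots> = \<delta>"
    using \<open>K > 0\<close> \<delta> by (simp add: L_def exp_minus)
  finally have "measure_pmf.prob M bad \<le> \<delta>" .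
  moreover have "- good \<subseteq> bad"
    using frontdoor_within_hwidth[OF N L_def[unfolded K_def], of _ P xt y]
    unfolding good_def bad_def by blast
  then have "measure_pmf.prob M (- good) \<le> measure_pmf.prob M bad"
    by (intro measure_pmf.finite_measure_mono) auto
  moreover have "measure_pmf.prob M (- good) = 1 - measure_pmf.prob M good"
    using measure_pmf.prob_compl[of good M] by (simp add: Compl_eq_Diff_UNIV)
  ultimately show ?thesis
    unfolding M_def good_def by linarith
qed

end
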